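(* For any two $n$-qubit density matrices $\rho,\sigma$, $|\mathcal{C}(\rho)-\mathcal{C}(\sigma)|\le\|\rho-\sigma\|_1$.
   Context: For an $n$-qubit density matrix $\rho$, $\mathcal{C}(\rho)=1-\mathrm{Tr}[(\bigotimes_{i=1}^n\Pi_+^{(i)})\rho^{\otimes 2}]$, where $\Pi_+^{(i)}=\frac12(\mathbb{1}+\mathbb{F}^{(i)})$ and $\mathbb{F}^{(i)}$ swaps the $i$-th qubits of the two copies. $\|\cdot\|_1$ is the trace norm. *)

theory Defs
  imports "Jordan_Normal_Form.Matrix" "Jordan_Normal_Form.Schur_Decomposition"
begin

definition mtrace :: "complex mat \<Rightarrow> complex" where
  "mtrace A = (\<Sum>i<dim_row A. A $$ (i, i))"

definition psd :: "nat \<Rightarrow> complex mat \<Rightarrow> bool" where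
  "psd d A \<longleftrightarrow> A \<in> carrier_mat d d \<and> mat_adjoint A = A \<and>
     (\<forall>v \<in> carrier_vec d. 0 \<le> Re ((\<Sum>i<d. cnj (v $ i) * (A *\<^sub>v v) $ i)))"

(* n-qubit density matrix: 2^n x 2^n, positive semidefinite, unit trace;
   computational basis state |b_1 ... b_n> has index with bit i (i<n) = b_i *)
definition density :: "nat \<Rightarrow> complex mat \<Rightarrow> bool" where
  "density n \<rho> \<longleftrightarrow> psd (2^n) \<rho> \<and> mtrace \<rho> = 1"

definition kron :: "complex mat \<Rightarrow> complex mat \<Rightarrow> complex mat" where
  "kron A B = mat (dim_row A * dim_row B) (dim_col A * dim_col B)
     (\<lambda>(i, j). A $$ (i div dim_row B, j div dim_col B) * B $$ (i mod dim_row B, j mod dim_col B))"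

definition qbit :: "nat \<Rightarrow> nat \<Rightarrow> nat" where
  "qbit i a = (a div 2^i) mod 2"

(* action of the swap F^(i) on a basis index of the two-copy space
   (index = a * 2^n + b, a the first copy, b the second copy):
   exchanges bit i of a with bit i of b *)
definition swap_idx :: "nat \<Rightarrow> nat \<Rightarrow> nat \<Rightarrow> nat" where
  "swap_idx n i k =
     (let a = k div 2^n; b = k mod 2^n;
          a' = a - qbit i a * 2^i + qbit i b * 2^i;
          b' = b - qbit i b * 2^i + qbit i a * 2^i
      in a' * 2^n + b')"

definition swapF :: "nat \<Rightarrow> nat \<Rightarrow> complex mat" where
  "swapF n i = mat (2^n * 2^n) (2^n * 2^n) (\<lambda>(r, c). if r = swap_idx n i c then 1 else 0)"

definition PiPlus :: "nat \<Rightarrow> nat \<Rightarrow> complex mat" where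
  "PiPlus n i = (1/2 :: complex) \<cdot>\<^sub>m (1\<^sub>m (2^n * 2^n) + swapF n i)"

(* \<Otimes>_{i=1}^n \<Pi>_+^(i): the operators act on disjoint qubit pairs, so their tensor
   product is the (commuting) product of the individual operators on the two-copy space *)
definition PiAll :: "nat \<Rightarrow> complex mat" where
  "PiAll n = foldr (\<lambda>i M. PiPlus n i * M) [0..<n] (1\<^sub>m (2^n * 2^n))"

definition Cmeas :: "nat \<Rightarrow> complex mat \<Rightarrow> real" where
  "Cmeas n \<rho> = 1 - Re (mtrace (PiAll n * kron \<rho> \<rho>))"

definition psd_sqrt :: "complex mat \<Rightarrow> complex mat" where
  "psd_sqrt A = (THE B. psd (dim_row A) B \<and> B * B = A)"

definition trace_norm :: "complex mat \<Rightarrow> real" where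
  "trace_norm A = Re (mtrace (psd_sqrt (mat_adjoint A * A)))"

end

theory Submission
  imports Defs
begin

(* \<Pi> = \<Pi>_+^(1) ... \<Pi>_+^(n) is a product of commuting Hermitian projections, hence an
   orthogonal projection, so 0 <= <x, \<Pi> x> <= <x, x>.  With G(X, Y) = Tr[\<Pi> (X \<otimes> Y)] and
   \<Delta> = \<rho> - \<sigma>, bilinearity gives C(\<rho>) - C(\<sigma>) = -(G(\<rho>, \<Delta>) + G(\<Delta>, \<sigma>)).
   In eigenbases \<rho> = \<Sum>_m p_m |w_m><w_m| and \<Delta> = \<Sum>_k t_k |u_k><u_k| one gets
   G(\<rho>, \<Delta>) = \<Sum>_k t_k c_k with c_k = \<Sum>_m p_m <w_m u_k| \<Pi> |w_m u_k> in [0, 1].  As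
   \<Sum>_k t_k = Tr \<Delta> = 0, this is \<Sum>_k t_k (c_k - 1/2), of modulus at most \<Sum>_k |t_k| / 2;
   likewise for G(\<Delta>, \<sigma>).  Finally \<Sum>_k |t_k| = ||\<Delta>||_1, because the positive
   semidefinite square root of \<Delta>\<^sup>2 is unique.  The spectral theorem for Hermitian
   matrices is obtained by deflation. *)

section \<open>Bit manipulation for the swap operators\<close>

definition bit_update :: "nat \<Rightarrow> nat \<Rightarrow> bool \<Rightarrow> nat" where
  "bit_update i x b = (if b then set_bit i x else unset_bit i x)"

lemma qbit_eq_of_bool_bit: "qbit i a = of_bool (bit a i)"
  unfolding qbit_def bit_iff_odd by (simp add: odd_iff_mod_2_eq_one even_iff_mod_2_eq_zero)

lemma unset_bit_nat_eq: "unset_bit i (x::nat) = x - of_bool (bit x i) * 2^i"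
proof -
  have "set_bit i (unset_bit i x) = set_bit i x"
    by (rule bit_eqI) (auto simp: bit_set_bit_iff bit_unset_bit_iff)
  moreover have "set_bit i (unset_bit i x) = unset_bit i x + 2^i"
    by (simp add: set_bit_eq bit_unset_bit_iff)
  moreover have "set_bit i x = x + of_bool (\<not> bit x i) * 2^i" by (rule set_bit_eq)
  ultimately show ?thesis by (cases "bit x i") auto
qed

lemma pow2_le_if_bit: "bit (x::nat) i \<Longrightarrow> 2^i \<le> x"
proof -
  assume "bit x i"
  then have "x div 2^i \<noteq> 0" unfolding bit_iff_odd by (metis even_zero)
  then show ?thesis by (simp add: div_eq_0_iff not_less)
qed

lemma bit_update_eq_arith: "x - qbit i x * 2^i + qbit i y * 2^i = bit_update i x (bit y i)"
  unfolding bit_update_def qbit_eq_of_bool_bit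
  by (cases "bit x i"; cases "bit y i") (auto simp: set_bit_eq unset_bit_nat_eq pow2_le_if_bit)

lemma bit_bit_update: "bit (bit_update i x b) j = (if j = i then b else bit x j)"
  unfolding bit_update_def by (auto simp: bit_set_bit_iff bit_unset_bit_iff)

lemma bit_update_less_pow2: assumes "x < 2^n" "i < n" shows "bit_update i x b < 2^n"
proof -
  have "take_bit n (bit_update i x b) = bit_update i x b"
  proof (rule bit_eqI)
    fix m
    have "bit x m \<Longrightarrow> m < n" using assms(1)
      by (metis bit_take_bit_iff take_bit_nat_eq_self_iff)
    then show "bit (take_bit n (bit_update i x b)) m = bit (bit_update i x b) m"
      using assms(2) by (auto simp: bit_take_bit_iff bit_bit_update)
  qed
  then show ?thesis using take_bit_nat_eq_self_iff by blast
qed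

lemma bit_update_bit_update: "bit_update i (bit_update i x b) c = bit_update i x c"
  by (rule bit_eqI) (simp add: bit_bit_update)

lemma bit_update_self: "bit_update i x (bit x i) = x"
  by (rule bit_eqI) (simp add: bit_bit_update)

lemma bit_update_commute: "i \<noteq> j \<Longrightarrow> bit_update i (bit_update j x c) b = bit_update j (bit_update i x b) c"
  by (rule bit_eqI) (simp add: bit_bit_update)

lemma swap_idx_eq_bit_update: "swap_idx n i k =
   bit_update i (k div 2^n) (bit (k mod 2^n) i) * 2^n + bit_update i (k mod 2^n) (bit (k div 2^n) i)"
  unfolding swap_idx_def Let_def bit_update_eq_arith by simp

lemma index_pair_less: assumes "a < (N::nat)" "b < N" shows "a * N + b < N * N"
proof -
  have "a * N + b < (a + 1) * N" using assms by simp
  also have "\<dots> \<le> N * N" using assms by (intro mult_right_mono) auto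
  finally show ?thesis .
qed

lemma swap_idx_less: assumes "k < 2^n * 2^n" "i < n" shows "swap_idx n i k < 2^n * 2^n"
proof -
  have "k div 2^n < 2^n" using assms(1) by (simp add: less_mult_imp_div_less)
  then show ?thesis
    unfolding swap_idx_eq_bit_update using assms(2)
    by (intro index_pair_less bit_update_less_pow2) simp_all
qed

lemma swap_idx_div_mod: assumes "i < n"
  shows "swap_idx n i k div 2^n = bit_update i (k div 2^n) (bit (k mod 2^n) i)"
    and "swap_idx n i k mod 2^n = bit_update i (k mod 2^n) (bit (k div 2^n) i)"
proof -
  have "bit_update i (k mod 2^n) (bit (k div 2^n) i) < 2^n"
    by (rule bit_update_less_pow2[OF _ assms]) simp
  then show "swap_idx n i k div 2^n = bit_update i (k div 2^n) (bit (k mod 2^n) i)"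
    and "swap_idx n i k mod 2^n = bit_update i (k mod 2^n) (bit (k div 2^n) i)"
    unfolding swap_idx_eq_bit_update by simp_all
qed

lemma nat_eq_by_div_mod: "(x::nat) div N = y div N \<Longrightarrow> x mod N = y mod N \<Longrightarrow> x = y"
  by (metis div_mult_mod_eq)

lemma swap_idx_swap_idx: assumes "i < n" shows "swap_idx n i (swap_idx n i k) = k"
  by (rule nat_eq_by_div_mod[where N="2^n"])
    (simp_all add: swap_idx_div_mod[OF assms] bit_bit_update bit_update_bit_update bit_update_self)

lemma swap_idx_eq_iff: "i < n \<Longrightarrow> (r = swap_idx n i m) = (m = swap_idx n i r)"
  using swap_idx_swap_idx by metis

lemma swap_idx_commute: assumes "i < n" "j < n"
  shows "swap_idx n i (swap_idx n j k) = swap_idx n j (swap_idx n i k)"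
proof (cases "i = j")
  case False
  show ?thesis
    by (rule nat_eq_by_div_mod[where N="2^n"])
      (simp_all add: swap_idx_div_mod[OF assms(1)] swap_idx_div_mod[OF assms(2)] bit_bit_update
        bit_update_commute False not_sym[OF False])
qed simp

section \<open>Inner products and Hermitian matrices\<close>

text \<open>Vectors of \<open>\<complex>\<^sup>d\<close> are modelled as functions \<open>nat \<Rightarrow> complex\<close> of which only the first
  \<open>d\<close> values matter.\<close>

definition cinner :: "nat \<Rightarrow> (nat \<Rightarrow> complex) \<Rightarrow> (nat \<Rightarrow> complex) \<Rightarrow> complex" where
  "cinner d x y = (\<Sum>i<d. cnj (x i) * y i)"

definition matvec :: "nat \<Rightarrow> complex mat \<Rightarrow> (nat \<Rightarrow> complex) \<Rightarrow> nat \<Rightarrow> complex" where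
  "matvec d A x i = (if i < d then (\<Sum>j<d. A $$ (i, j) * x j) else 0)"

definition hermitian :: "nat \<Rightarrow> complex mat \<Rightarrow> bool" where
  "hermitian d A \<longleftrightarrow> A \<in> carrier_mat d d \<and> (\<forall>i<d. \<forall>j<d. A $$ (j, i) = cnj (A $$ (i, j)))"

lemma hermitianD: "hermitian d A \<Longrightarrow> i < d \<Longrightarrow> j < d \<Longrightarrow> A $$ (j, i) = cnj (A $$ (i, j))"
  unfolding hermitian_def by blast

lemma hermitian_carrier: "hermitian d A \<Longrightarrow> A \<in> carrier_mat d d"
  unfolding hermitian_def by blast

lemma index_mult_mat_sum:
  assumes "A \<in> carrier_mat a b" "B \<in> carrier_mat b c" "i < a" "j < c"
  shows "(A * B) $$ (i, j) = (\<Sum>m<b. A $$ (i, m) * B $$ (m, j))"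
  using assms by (auto simp: scalar_prod_def lessThan_atLeast0 intro!: sum.cong)

lemma hermitian_minus:
  assumes "hermitian d A" "hermitian d B" shows "hermitian d (A - B)"
proof -
  have A: "A \<in> carrier_mat d d" and B: "B \<in> carrier_mat d d" using assms hermitian_carrier by auto
  show ?thesis unfolding hermitian_def
  proof (intro conjI allI impI)
    fix i j assume i: "i < d" and j: "j < d"
    show "(A - B) $$ (j, i) = cnj ((A - B) $$ (i, j))"
      using A B i j hermitianD[OF assms(1) i j] hermitianD[OF assms(2) i j] by simp
  qed (use A B in auto)
qed

lemma hermitian_mult_commute:
  assumes "hermitian d A" "hermitian d B" "A * B = B * A"
  shows "hermitian d (A * B)"
proof -
  have A: "A \<in> carrier_mat d d" and B: "B \<in> carrier_mat d d" using assms hermitian_carrier by auto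
  show ?thesis unfolding hermitian_def
  proof (intro conjI allI impI)
    fix i j assume i: "i < d" and j: "j < d"
    have "(A * B) $$ (j, i) = (\<Sum>m<d. A $$ (j, m) * B $$ (m, i))" by (rule index_mult_mat_sum[OF A B j i])
    also have "\<dots> = (\<Sum>m<d. cnj (B $$ (i, m) * A $$ (m, j)))"
      using hermitianD[OF assms(1) _ j] hermitianD[OF assms(2) i] by (intro sum.cong) auto
    also have "\<dots> = cnj ((B * A) $$ (i, j))" by (simp add: index_mult_mat_sum[OF B A i j])
    finally show "(A * B) $$ (j, i) = cnj ((A * B) $$ (i, j))" using assms(3) by simp
  qed (use A B in auto)
qed

lemma cinner_cong:
  "(\<And>i. i < d \<Longrightarrow> x i = x' i) \<Longrightarrow> (\<And>i. i < d \<Longrightarrow> y i = y' i) \<Longrightarrow> cinner d x y = cinner d x' y'"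
  unfolding cinner_def by simp

lemma cnj_cinner: "cnj (cinner d x y) = cinner d y x"
  unfolding cinner_def by (simp add: mult.commute)

lemma cinner_self: "cinner d x x = of_real (\<Sum>i<d. (cmod (x i))\<^sup>2)"
  unfolding cinner_def by (simp add: complex_norm_square[symmetric] mult.commute)

lemma Re_cinner_self_nonneg: "0 \<le> Re (cinner d x x)"
  unfolding cinner_self by (simp add: sum_nonneg)

lemma cinner_self_eq_0_iff: "cinner d x x = 0 \<longleftrightarrow> (\<forall>i<d. x i = 0)"
proof -
  have "cinner d x x = 0 \<longleftrightarrow> (\<Sum>i<d. (cmod (x i))\<^sup>2) = 0"
    unfolding cinner_self of_real_eq_0_iff ..
  also have "\<dots> \<longleftrightarrow> (\<forall>i<d. x i = 0)" by (auto simp: sum_nonneg_eq_0_iff)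
  finally show ?thesis .
qed

lemma cinner_diff_left: "cinner d (\<lambda>i. x i - y i) z = cinner d x z - cinner d y z"
  unfolding cinner_def by (simp add: algebra_simps sum_subtractf)

lemma cinner_diff_right: "cinner d z (\<lambda>i. x i - y i) = cinner d z x - cinner d z y"
  unfolding cinner_def by (simp add: algebra_simps sum_subtractf)

lemma cinner_add_right: "cinner d x (\<lambda>i. y i + z i) = cinner d x y + cinner d x z"
  unfolding cinner_def by (simp add: algebra_simps sum.distrib)

lemma cinner_scale_left: "cinner d (\<lambda>i. a * x i) y = cnj a * cinner d x y"
  unfolding cinner_def by (simp add: sum_distrib_left mult.assoc)

lemma cinner_scale_right: "cinner d x (\<lambda>i. a * y i) = a * cinner d x y"
  unfolding cinner_def by (simp add: sum_distrib_left mult.left_commute)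

lemma matvec_scale: "matvec d A (\<lambda>i. a * x i) i = a * matvec d A x i"
  unfolding matvec_def by (simp add: sum_distrib_left mult.left_commute)

lemma matvec_minus:
  "A \<in> carrier_mat d d \<Longrightarrow> B \<in> carrier_mat d d \<Longrightarrow> matvec d (A - B) x i = matvec d A x i - matvec d B x i"
  unfolding matvec_def by (auto simp: algebra_simps sum_subtractf)

lemma matvec_mult:
  assumes "A \<in> carrier_mat d d" "B \<in> carrier_mat d d"
  shows "matvec d (A * B) x = matvec d A (matvec d B x)"
proof
  fix i show "matvec d (A * B) x i = matvec d A (matvec d B x) i"
  proof (cases "i < d")
    case True
    have "matvec d (A * B) x i = (\<Sum>j<d. \<Sum>m<d. A $$ (i, m) * B $$ (m, j) * x j)"
      unfolding matvec_def using True index_mult_mat_sum[OF assms True] by (simp add: sum_distrib_right)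
    also have "\<dots> = (\<Sum>m<d. \<Sum>j<d. A $$ (i, m) * B $$ (m, j) * x j)" by (rule sum.swap)
    also have "\<dots> = matvec d A (matvec d B x) i"
      unfolding matvec_def using True by (simp add: sum_distrib_left mult.assoc)
    finally show ?thesis .
  qed (simp add: matvec_def)
qed

lemma matvec_mult_mat_vec:
  "A \<in> carrier_mat d d \<Longrightarrow> v \<in> carrier_vec d \<Longrightarrow> i < d \<Longrightarrow> (A *\<^sub>v v) $ i = matvec d A (\<lambda>j. v $ j) i"
  by (auto simp: matvec_def scalar_prod_def lessThan_atLeast0 intro!: sum.cong)

lemma cinner_matvec_hermitian:
  assumes "hermitian d A" shows "cinner d x (matvec d A y) = cinner d (matvec d A x) y"
proof -
  have "cinner d x (matvec d A y) = (\<Sum>i<d. \<Sum>j<d. cnj (x i) * A $$ (i, j) * y j)"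
    unfolding cinner_def matvec_def by (simp add: sum_distrib_left mult.assoc)
  also have "\<dots> = (\<Sum>j<d. \<Sum>i<d. cnj (x i) * A $$ (i, j) * y j)" by (rule sum.swap)
  also have "\<dots> = (\<Sum>j<d. (\<Sum>i<d. cnj (A $$ (j, i) * x i)) * y j)"
  proof (rule sum.cong[OF refl])
    fix j assume "j \<in> {..<d}"
    then have "\<And>i. i < d \<Longrightarrow> cnj (A $$ (j, i)) = A $$ (i, j)"
      using hermitianD[OF assms] by (metis lessThan_iff)
    then show "(\<Sum>i<d. cnj (x i) * A $$ (i, j) * y j) = (\<Sum>i<d. cnj (A $$ (j, i) * x i)) * y j"
      unfolding sum_distrib_right by (intro sum.cong) auto
  qed
  also have "\<dots> = cinner d (matvec d A x) y"
    unfolding cinner_def matvec_def by simp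
  finally show ?thesis .
qed

lemma hermitian_idem_cinner_bounds:
  assumes "hermitian d Q" "Q * Q = Q"
  shows "0 \<le> Re (cinner d x (matvec d Q x)) \<and> Re (cinner d x (matvec d Q x)) \<le> Re (cinner d x x)"
proof -
  let ?y = "matvec d Q x"
  have Q: "Q \<in> carrier_mat d d" using assms(1) hermitian_carrier by auto
  have xy: "cinner d x ?y = cinner d ?y ?y"
    by (metis Q assms(2) matvec_mult cinner_matvec_hermitian[OF assms(1)])
  have yx: "cinner d ?y x = cinner d x ?y"
    using cinner_matvec_hermitian[OF assms(1)] by simp
  have "cinner d (\<lambda>i. x i - ?y i) (\<lambda>i. x i - ?y i) = cinner d x x - cinner d x ?y"
    unfolding cinner_diff_left cinner_diff_right using xy yx by simp
  then have "0 \<le> Re (cinner d x x - cinner d x ?y)" by (metis Re_cinner_self_nonneg)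
  then show ?thesis using xy Re_cinner_self_nonneg[of d ?y] by simp
qed

lemma foldr_mult_carrier: "\<forall>Q\<in>set Qs. Q \<in> carrier_mat d d \<Longrightarrow> foldr (*) Qs (1\<^sub>m d) \<in> carrier_mat d d"
  by (induction Qs) auto

lemma commute_foldr_mult:
  fixes P :: "'a::semiring_1 mat"
  assumes P: "P \<in> carrier_mat d d" and Qs: "\<forall>Q\<in>set Qs. Q \<in> carrier_mat d d \<and> P * Q = Q * P"
  shows "P * foldr (*) Qs (1\<^sub>m d) = foldr (*) Qs (1\<^sub>m d) * P"
  using Qs
proof (induction Qs)
  case Nil
  show ?case using P by simp
next
  case (Cons Q Qs)
  let ?R = "foldr (*) Qs (1\<^sub>m d)"
  have Q: "Q \<in> carrier_mat d d" and PQ: "P * Q = Q * P" and IH: "P * ?R = ?R * P"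
    using Cons by auto
  have R: "?R \<in> carrier_mat d d" using Cons.prems foldr_mult_carrier by auto
  have "P * (Q * ?R) = (P * Q) * ?R" by (rule assoc_mult_mat[OF P Q R, symmetric])
  also have "\<dots> = Q * (P * ?R)" unfolding PQ by (rule assoc_mult_mat[OF Q P R])
  also have "\<dots> = (Q * ?R) * P" unfolding IH by (rule assoc_mult_mat[OF Q R P, symmetric])
  finally show ?case by simp
qed

lemma foldr_mult_hermitian_idem:
  assumes "\<forall>Q\<in>set Qs. hermitian d Q \<and> Q * Q = Q" and "\<forall>P\<in>set Qs. \<forall>Q\<in>set Qs. P * Q = Q * P"
  shows "hermitian d (foldr (*) Qs (1\<^sub>m d))
    \<and> foldr (*) Qs (1\<^sub>m d) * foldr (*) Qs (1\<^sub>m d) = foldr (*) Qs (1\<^sub>m d)"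
  using assms
proof (induction Qs)
  case Nil
  show ?case unfolding hermitian_def by auto
next
  case (Cons Q Qs)
  let ?R = "foldr (*) Qs (1\<^sub>m d)"
  have hQ: "hermitian d Q" and QQ: "Q * Q = Q" using Cons.prems(1) by auto
  have IH: "hermitian d ?R" "?R * ?R = ?R"
    using Cons.IH Cons.prems by (meson list.set_intros(2))+
  have Q: "Q \<in> carrier_mat d d" and R: "?R \<in> carrier_mat d d"
    using hQ IH(1) hermitian_carrier by auto
  have "\<forall>P\<in>set Qs. P \<in> carrier_mat d d \<and> Q * P = P * Q"
    using Cons.prems hermitian_carrier by (meson list.set_intros)
  then have QR: "Q * ?R = ?R * Q" by (rule commute_foldr_mult[OF Q])
  have "(Q * ?R) * (Q * ?R) = Q * ((?R * Q) * ?R)"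
    using assoc_mult_mat[OF Q R, of "Q * ?R" d] assoc_mult_mat[OF R Q R] Q R by simp
  also have "\<dots> = (Q * Q) * (?R * ?R)"
    using assoc_mult_mat[OF Q R R] assoc_mult_mat[OF Q Q, of "?R * ?R" d] R
    unfolding QR[symmetric] by simp
  finally have "(Q * ?R) * (Q * ?R) = Q * ?R" using QQ IH(2) by simp
  then show ?case using hermitian_mult_commute[OF hQ IH(1) QR] by simp
qed

section \<open>The two-copy symmetric projection\<close>

lemma PiPlus_carrier: "PiPlus n i \<in> carrier_mat (2^n * 2^n) (2^n * 2^n)"
  unfolding PiPlus_def swapF_def by auto

lemma PiPlus_dims [simp]: "dim_row (PiPlus n i) = 2^n * 2^n" "dim_col (PiPlus n i) = 2^n * 2^n"
  using PiPlus_carrier[of n i] by auto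

lemma index_PiPlus:
  assumes "r < 2^n * 2^n" "c < 2^n * 2^n"
  shows "PiPlus n i $$ (r, c) = (of_bool (r = c) + of_bool (r = swap_idx n i c)) / 2"
  using assms unfolding PiPlus_def swapF_def by auto

lemma sum_of_bool_eq_mult:
  assumes "r < (M::nat)" shows "(\<Sum>m<M. of_bool (r = m) * (g m :: complex)) = g r"
proof -
  have "(\<Sum>m<M. of_bool (r = m) * g m) = (\<Sum>m<M. if m = r then g r else 0)"
    by (intro sum.cong) auto
  also have "\<dots> = g r" using assms by simp
  finally show ?thesis .
qed

lemma sum_of_bool_swap_idx_mult:
  assumes "i < n" "r < 2^n * 2^n"
  shows "(\<Sum>m<2^n * 2^n. of_bool (r = swap_idx n i m) * (g m :: complex)) = g (swap_idx n i r)"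
proof -
  have "(\<Sum>m<2^n * 2^n. of_bool (r = swap_idx n i m) * g m)
      = (\<Sum>m<2^n * 2^n. of_bool (swap_idx n i r = m) * g m)"
    using swap_idx_eq_iff[OF assms(1)] by (intro sum.cong) auto
  also have "\<dots> = g (swap_idx n i r)"
    by (rule sum_of_bool_eq_mult[OF swap_idx_less[OF assms(2,1)]])
  finally show ?thesis .
qed

lemma index_PiPlus_mult:
  assumes "i < n" "j < n" "r < 2^n * 2^n" "c < 2^n * 2^n"
  shows "(PiPlus n i * PiPlus n j) $$ (r, c) =
    (of_bool (r = c) + of_bool (r = swap_idx n j c) + of_bool (r = swap_idx n i c)
     + of_bool (r = swap_idx n i (swap_idx n j c))) / 4"
proof -
  let ?M = "2^n * 2^n :: nat"
  let ?g = "\<lambda>m. PiPlus n j $$ (m, c)"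
  have s: "swap_idx n i r < ?M" using swap_idx_less assms by auto
  have "(PiPlus n i * PiPlus n j) $$ (r, c) = (\<Sum>m<?M. PiPlus n i $$ (r, m) * ?g m)"
    by (rule index_mult_mat_sum[OF PiPlus_carrier PiPlus_carrier assms(3,4)])
  also have "\<dots> = (\<Sum>m<?M. (of_bool (r = m) * ?g m + of_bool (r = swap_idx n i m) * ?g m) / 2)"
    using assms by (intro sum.cong) (auto simp: index_PiPlus algebra_simps add_divide_distrib)
  also have "\<dots> = (?g r + ?g (swap_idx n i r)) / 2"
    unfolding sum_divide_distrib[symmetric] sum.distrib
    using sum_of_bool_eq_mult[OF assms(3)] sum_of_bool_swap_idx_mult[OF assms(1,3)] by simp
  also have "\<dots> = (of_bool (r = c) + of_bool (r = swap_idx n j c) + of_bool (r = swap_idx n i c)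
     + of_bool (r = swap_idx n i (swap_idx n j c))) / 4"
  proof -
    have "(swap_idx n i r = c) = (r = swap_idx n i c)"
      and "(swap_idx n i r = swap_idx n j c) = (r = swap_idx n i (swap_idx n j c))"
      using swap_idx_eq_iff[OF assms(1)] by metis+
    then show ?thesis unfolding index_PiPlus[OF assms(3,4)] index_PiPlus[OF s assms(4)]
      by (simp add: field_simps)
  qed
  finally show ?thesis .
qed

lemma PiPlus_commute:
  assumes "i < n" "j < n" shows "PiPlus n i * PiPlus n j = PiPlus n j * PiPlus n i"
proof (rule eq_matI)
  fix r c assume "r < dim_row (PiPlus n j * PiPlus n i)" "c < dim_col (PiPlus n j * PiPlus n i)"
  then have r: "r < 2^n * 2^n" and c: "c < 2^n * 2^n" by auto
  show "(PiPlus n i * PiPlus n j) $$ (r, c) = (PiPlus n j * PiPlus n i) $$ (r, c)"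
    unfolding index_PiPlus_mult[OF assms r c] index_PiPlus_mult[OF assms(2,1) r c]
      swap_idx_commute[OF assms] by (simp add: algebra_simps)
qed (use PiPlus_carrier in auto)

lemma PiPlus_idem: assumes "i < n" shows "PiPlus n i * PiPlus n i = PiPlus n i"
proof (rule eq_matI)
  fix r c assume "r < dim_row (PiPlus n i)" "c < dim_col (PiPlus n i)"
  then have r: "r < 2^n * 2^n" and c: "c < 2^n * 2^n" by auto
  show "(PiPlus n i * PiPlus n i) $$ (r, c) = PiPlus n i $$ (r, c)"
    unfolding index_PiPlus_mult[OF assms assms r c] index_PiPlus[OF r c] swap_idx_swap_idx[OF assms]
    by (simp add: field_simps)
qed (use PiPlus_carrier in auto)

lemma PiPlus_hermitian: assumes "i < n" shows "hermitian (2^n * 2^n) (PiPlus n i)"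
  unfolding hermitian_def
proof (intro conjI allI impI)
  fix r c :: nat assume r: "r < 2^n * 2^n" and c: "c < 2^n * 2^n"
  show "PiPlus n i $$ (c, r) = cnj (PiPlus n i $$ (r, c))"
    unfolding index_PiPlus[OF r c] index_PiPlus[OF c r] swap_idx_eq_iff[OF assms, of c]
    by (auto simp: eq_commute[of r c])
qed (rule PiPlus_carrier)

lemma PiAll_eq_foldr: "PiAll n = foldr (*) (map (PiPlus n) [0..<n]) (1\<^sub>m (2^n * 2^n))"
  unfolding PiAll_def foldr_map comp_def ..

lemma PiAll_hermitian_idem: "hermitian (2^n * 2^n) (PiAll n) \<and> PiAll n * PiAll n = PiAll n"
  unfolding PiAll_eq_foldr
  by (rule foldr_mult_hermitian_idem) (auto simp: PiPlus_hermitian PiPlus_idem PiPlus_commute)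

lemma PiAll_carrier: "PiAll n \<in> carrier_mat (2^n * 2^n) (2^n * 2^n)"
  using PiAll_hermitian_idem hermitian_carrier by blast

lemma PiAll_dims [simp]: "dim_row (PiAll n) = 2^n * 2^n" "dim_col (PiAll n) = 2^n * 2^n"
  using PiAll_carrier[of n] by auto

section \<open>The spectral theorem for Hermitian matrices\<close>

definition orthonormal :: "nat \<Rightarrow> nat \<Rightarrow> (nat \<Rightarrow> nat \<Rightarrow> complex) \<Rightarrow> bool" where
  "orthonormal d k u \<longleftrightarrow> (\<forall>j<k. \<forall>l<k. cinner d (u j) (u l) = of_bool (j = l))"

definition eigenpairs ::
  "nat \<Rightarrow> complex mat \<Rightarrow> nat \<Rightarrow> (nat \<Rightarrow> nat \<Rightarrow> complex) \<Rightarrow> (nat \<Rightarrow> real) \<Rightarrow> bool" where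
  "eigenpairs d A k u lam \<longleftrightarrow> (\<forall>j<k. \<forall>i<d. matvec d A (u j) i = of_real (lam j) * u j i)"

definition deflation ::
  "nat \<Rightarrow> complex mat \<Rightarrow> nat \<Rightarrow> (nat \<Rightarrow> nat \<Rightarrow> complex) \<Rightarrow> (nat \<Rightarrow> real) \<Rightarrow> complex mat" where
  "deflation d A k u \<alpha> = mat d d (\<lambda>(a, b). A $$ (a, b) - (\<Sum>l<k. of_real (\<alpha> l) * u l a * cnj (u l b)))"

definition spectral_mat :: "nat \<Rightarrow> (nat \<Rightarrow> nat \<Rightarrow> complex) \<Rightarrow> (nat \<Rightarrow> real) \<Rightarrow> complex mat" where
  "spectral_mat d u lam = mat d d (\<lambda>(a, b). \<Sum>k<d. of_real (lam k) * u k a * cnj (u k b))"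

lemma mtrace_mult_commute:
  assumes "X \<in> carrier_mat a b" "Y \<in> carrier_mat b a"
  shows "mtrace (X * Y) = mtrace (Y * X)"
proof -
  have "mtrace (X * Y) = (\<Sum>i<a. \<Sum>m<b. X $$ (i, m) * Y $$ (m, i))"
    unfolding mtrace_def using assms index_mult_mat_sum[OF assms] by (intro sum.cong) auto
  also have "\<dots> = (\<Sum>m<b. \<Sum>i<a. Y $$ (m, i) * X $$ (i, m))"
    by (subst sum.swap) (simp add: mult.commute)
  also have "\<dots> = mtrace (Y * X)"
    unfolding mtrace_def using assms index_mult_mat_sum[OF assms(2,1)] by (intro sum.cong) auto
  finally show ?thesis .
qed

lemma mtrace_similar:
  assumes "similar_mat_wit A T P Q" "A \<in> carrier_mat d d"
  shows "mtrace A = mtrace T"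
proof -
  note w = similar_mat_witD2[OF assms(2,1)]
  have "mtrace A = mtrace ((P * T) * Q)" using w by simp
  also have "\<dots> = mtrace (Q * (P * T))" by (rule mtrace_mult_commute) (use w in auto)
  also have "Q * (P * T) = (Q * P) * T" by (rule assoc_mult_mat[symmetric]) (use w in auto)
  also have "(Q * P) * T = T" using w by simp
  finally show ?thesis .
qed

text \<open>The trace is the sum of the eigenvalues, read off the diagonal of a Schur form.\<close>

lemma exists_eigenvector_ne:
  fixes M :: "complex mat"
  assumes M: "M \<in> carrier_mat d d" and tr: "mtrace M \<noteq> of_nat d * c"
  shows "\<exists>v e. eigenvector M v e \<and> e \<noteq> c"
proof -
  obtain es where cp: "char_poly M = (\<Prod>e\<leftarrow>es. [:- e, 1:])"
    using char_poly_factorized[OF M] by blast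
  obtain T P Q where "schur_decomposition M es = (T, P, Q)" by (cases "schur_decomposition M es") auto
  then have sim: "similar_mat_wit M T P Q" and dT: "diag_mat T = es"
    using schur_decomposition[OF M cp] by auto
  have T: "T \<in> carrier_mat d d" using similar_mat_witD2[OF M sim] by auto
  have "\<exists>i<d. T $$ (i, i) \<noteq> c"
  proof (rule ccontr)
    assume "\<not> ?thesis"
    then have "mtrace M = of_nat d * c"
      using mtrace_similar[OF sim M] T unfolding mtrace_def by simp
    with tr show False ..
  qed
  then obtain i where i: "i < d" and ne: "T $$ (i, i) \<noteq> c" by blast
  have "T $$ (i, i) \<in> set es" unfolding dT[symmetric] diag_mat_def using i T by auto
  then have "poly (char_poly M) (T $$ (i, i)) = 0" unfolding cp by (rule linear_poly_root)
  then have "eigenvalue M (T $$ (i, i))" using eigenvalue_root_char_poly[OF M] by simp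
  then show ?thesis using ne unfolding eigenvalue_def by blast
qed

lemma cinner_eigenvector:
  assumes "\<And>i. i < d \<Longrightarrow> matvec d A f i = e * f i"
  shows "cinner d g (matvec d A f) = e * cinner d g f"
    and "cinner d (matvec d A f) g = cnj e * cinner d f g"
proof -
  have "cinner d g (matvec d A f) = cinner d g (\<lambda>i. e * f i)"
    and "cinner d (matvec d A f) g = cinner d (\<lambda>i. e * f i) g"
    using assms by (auto intro: cinner_cong)
  then show "cinner d g (matvec d A f) = e * cinner d g f"
    and "cinner d (matvec d A f) g = cnj e * cinner d f g"
    by (simp_all add: cinner_scale_left cinner_scale_right)
qed

lemma hermitian_eigenvalue_real:
  assumes A: "hermitian d A" and f: "\<And>i. i < d \<Longrightarrow> matvec d A f i = e * f i"
    and nz: "cinner d f f \<noteq> 0"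
  shows "e = of_real (Re e)"
proof -
  have "e * cinner d f f = cnj e * cinner d f f"
    using cinner_matvec_hermitian[OF A, of f f] cinner_eigenvector[OF f] by simp
  then have "cnj e = e" using nz by simp
  then show ?thesis by (simp add: Reals_cnj_iff)
qed

lemma hermitian_eigenvectors_orthogonal:
  assumes A: "hermitian d A"
    and f: "\<And>i. i < d \<Longrightarrow> matvec d A f i = e * f i"
    and g: "\<And>i. i < d \<Longrightarrow> matvec d A g i = of_real c * g i"
    and ne: "e \<noteq> of_real c"
  shows "cinner d g f = 0"
proof -
  have "e * cinner d g f = of_real c * cinner d g f"
    using cinner_matvec_hermitian[OF A, of g f] cinner_eigenvector[OF f] cinner_eigenvector[OF g]
    by simp
  then show ?thesis using ne by simp
qed

lemma cinner_normalize:
  assumes "cinner d f f \<noteq> 0"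
  defines "s \<equiv> complex_of_real (sqrt (Re (cinner d f f)))"
  shows "cinner d (\<lambda>i. f i / s) (\<lambda>i. f i / s) = 1"
proof -
  have pos: "0 < Re (cinner d f f)"
    using assms(1) Re_cinner_self_nonneg[of d f] cinner_self[of d f] by (metis Re_complex_of_real less_eq_real_def of_real_0)
  have "s * s = complex_of_real (Re (cinner d f f))"
    unfolding s_def of_real_mult[symmetric] using pos by simp
  also have "\<dots> = cinner d f f" by (simp add: cinner_self)
  finally have ss: "s * s = cinner d f f" .
  have "cinner d (\<lambda>i. f i / s) (\<lambda>i. f i / s) = cinner d f f / (s * s)"
    unfolding cinner_def s_def by (simp add: sum_divide_distrib)
  then show ?thesis using ss assms(1) by simp
qed

lemma matvec_deflation:
  assumes "A \<in> carrier_mat d d" "i < d"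
  shows "matvec d (deflation d A k u \<alpha>) x i
       = matvec d A x i - (\<Sum>l<k. of_real (\<alpha> l) * u l i * cinner d (u l) x)"
proof -
  have "matvec d (deflation d A k u \<alpha>) x i
     = (\<Sum>j<d. A $$ (i, j) * x j) - (\<Sum>j<d. \<Sum>l<k. of_real (\<alpha> l) * u l i * cnj (u l j) * x j)"
    using assms unfolding matvec_def deflation_def
    by (simp add: left_diff_distrib sum_subtractf sum_distrib_right)
  also have "(\<Sum>j<d. \<Sum>l<k. of_real (\<alpha> l) * u l i * cnj (u l j) * x j)
      = (\<Sum>l<k. of_real (\<alpha> l) * u l i * cinner d (u l) x)"
    unfolding cinner_def by (subst sum.swap) (simp add: sum_distrib_left mult.assoc)
  finally show ?thesis using assms unfolding matvec_def by simp
qed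

lemma hermitian_deflation:
  assumes "hermitian d A" shows "hermitian d (deflation d A k u \<alpha>)"
  unfolding hermitian_def
proof (intro conjI allI impI)
  fix i j assume i: "i < d" and j: "j < d"
  show "deflation d A k u \<alpha> $$ (j, i) = cnj (deflation d A k u \<alpha> $$ (i, j))"
    using hermitianD[OF assms i j] i j by (simp add: deflation_def ac_simps)
qed (simp add: deflation_def)

lemma mtrace_deflation:
  assumes "A \<in> carrier_mat d d" "orthonormal d k u"
  shows "mtrace (deflation d A k u \<alpha>) = mtrace A - of_real (\<Sum>l<k. \<alpha> l)"
proof -
  have "mtrace (deflation d A k u \<alpha>)
      = (\<Sum>a<d. A $$ (a, a)) - (\<Sum>a<d. \<Sum>l<k. of_real (\<alpha> l) * u l a * cnj (u l a))"
    unfolding mtrace_def deflation_def by (simp add: sum_subtractf)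
  also have "(\<Sum>a<d. \<Sum>l<k. of_real (\<alpha> l) * u l a * cnj (u l a))
      = (\<Sum>l<k. of_real (\<alpha> l) * cinner d (u l) (u l))"
    unfolding cinner_def by (subst sum.swap) (simp add: sum_distrib_left ac_simps)
  also have "\<dots> = of_real (\<Sum>l<k. \<alpha> l)" using assms(2) unfolding orthonormal_def by simp
  finally show ?thesis unfolding mtrace_def using assms(1) by simp
qed

lemma matvec_deflation_eigenpairs:
  assumes "A \<in> carrier_mat d d" "orthonormal d k u" "eigenpairs d A k u lam" "j < k" "i < d"
  shows "matvec d (deflation d A k u (\<lambda>l. lam l - c)) (u j) i = of_real c * u j i"
proof -
  have "(\<Sum>l<k. of_real (lam l - c) * u l i * cinner d (u l) (u j))
      = (\<Sum>l<k. if l = j then of_real (lam j - c) * u j i else 0)"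
    using assms(2,4) unfolding orthonormal_def by (intro sum.cong) auto
  also have "\<dots> = of_real (lam j - c) * u j i" using assms(4) by simp
  finally show ?thesis
    unfolding matvec_deflation[OF assms(1,5)]
    using assms(3-5) unfolding eigenpairs_def by (simp add: algebra_simps)
qed

text \<open>Deflating the known eigenpairs to the eigenvalue \<open>c\<close> and choosing \<open>c\<close> so that the trace of
  the deflated matrix differs from \<open>d c\<close> forces an eigenvalue \<open>e \<noteq> c\<close>; its eigenvectors are
  orthogonal to the known ones, hence are eigenvectors of \<open>A\<close> as well.\<close>

lemma spectral_step:
  assumes A: "hermitian d A" and k: "k < d" and on: "orthonormal d k u" and ev: "eigenpairs d A k u lam"
  shows "\<exists>w e. cinner d w w = 1 \<and> (\<forall>j<k. cinner d (u j) w = 0) \<and> (\<forall>i<d. matvec d A w i = of_real e * w i)"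
proof -
  have Ac: "A \<in> carrier_mat d d" using A hermitian_carrier by blast
  define c where "c = (Re (mtrace A) - (\<Sum>j<k. lam j)) / real (d - k) + 1"
  define B where "B = deflation d A k u (\<lambda>l. lam l - c)"
  have B: "B \<in> carrier_mat d d" by (simp add: B_def deflation_def)
  have "Re (mtrace B) = Re (mtrace A) - (\<Sum>l<k. lam l) + real k * c"
    unfolding B_def mtrace_deflation[OF Ac on] by (simp add: sum_subtractf)
  also have "\<dots> = real d * c - real (d - k)"
    unfolding c_def using k by (simp add: field_simps)
  finally have "mtrace B \<noteq> of_nat d * of_real c" using k by auto
  then obtain v e where "eigenvector B v e" and ne: "e \<noteq> of_real c"
    using exists_eigenvector_ne[OF B] by blast
  then have v: "v \<in> carrier_vec d" and v0: "v \<noteq> 0\<^sub>v d" and Bv: "B *\<^sub>v v = e \<cdot>\<^sub>v v"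
    unfolding eigenvector_def using B by auto
  define f where "f = (\<lambda>j. v $ j)"
  have Bf: "matvec d B f i = e * f i" if "i < d" for i
    using matvec_mult_mat_vec[OF B v that] arg_cong[OF Bv, of "\<lambda>w. w $ i"] v that unfolding f_def by simp
  have nz: "cinner d f f \<noteq> 0"
    using v v0 unfolding cinner_self_eq_0_iff f_def by auto
  have orth: "cinner d (u j) f = 0" if "j < k" for j
    using hermitian_eigenvectors_orthogonal[OF _ Bf _ ne] matvec_deflation_eigenpairs[OF Ac on ev that]
      hermitian_deflation[OF A] unfolding B_def by blast
  have Af: "matvec d A f i = e * f i" if "i < d" for i
    using Bf[OF that] orth unfolding B_def matvec_deflation[OF Ac that] by simp
  define s where "s = complex_of_real (sqrt (Re (cinner d f f)))"
  have "\<forall>i<d. matvec d A (\<lambda>i. f i / s) i = of_real (Re e) * (f i / s)"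
    using Af hermitian_eigenvalue_real[OF A Af nz] matvec_scale[of d A "inverse s" f]
    by (simp add: divide_inverse ac_simps)
  moreover have "\<forall>j<k. cinner d (u j) (\<lambda>i. f i / s) = 0"
    using orth cinner_scale_right[of d _ "inverse s" f] by (simp add: divide_inverse ac_simps)
  ultimately show ?thesis using cinner_normalize[OF nz] unfolding s_def by blast
qed

lemma orthonormal_eigenpairs_exist:
  assumes A: "hermitian d A" shows "k \<le> d \<Longrightarrow> \<exists>u lam. orthonormal d k u \<and> eigenpairs d A k u lam"
proof (induction k)
  case 0
  show ?case unfolding orthonormal_def eigenpairs_def by auto
next
  case (Suc k)
  then obtain u lam where on: "orthonormal d k u" and ev: "eigenpairs d A k u lam" by auto
  from spectral_step[OF A _ on ev] Suc.prems obtain w e where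
    ww: "cinner d w w = 1" and wu: "\<forall>j<k. cinner d (u j) w = 0"
    and Aw: "\<forall>i<d. matvec d A w i = of_real e * w i"
    by auto
  have "orthonormal d (Suc k) (u(k := w))" unfolding orthonormal_def
  proof (intro allI impI)
    fix j l assume j: "j < Suc k" and l: "l < Suc k"
    show "cinner d ((u(k := w)) j) ((u(k := w)) l) = of_bool (j = l)"
    proof (cases "j = k"; cases "l = k")
      assume "j = k" "l \<noteq> k"
      then show ?thesis using wu l cnj_cinner[of d "u l" w] by auto
    next
      assume "j \<noteq> k" "l \<noteq> k"
      then show ?thesis using on j l unfolding orthonormal_def by auto
    qed (use ww wu j in auto)
  qed
  moreover have "eigenpairs d A (Suc k) (u(k := w)) (lam(k := e))"
    using ev Aw unfolding eigenpairs_def by (auto simp: less_Suc_eq)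
  ultimately show ?case by blast
qed

text \<open>A left inverse of a square matrix is also a right inverse.\<close>

lemma orthonormal_complete:
  assumes on: "orthonormal d d u" and a: "a < d" and b: "b < d"
  shows "(\<Sum>k<d. u k a * cnj (u k b)) = of_bool (a = b)"
proof -
  define U where "U = mat d d (\<lambda>(a, k). u k a)"
  define V where "V = mat d d (\<lambda>(k, b). cnj (u k b))"
  have U: "U \<in> carrier_mat d d" and V: "V \<in> carrier_mat d d" unfolding U_def V_def by auto
  have "V * U = 1\<^sub>m d"
  proof (rule eq_matI)
    fix k l assume "k < dim_row (1\<^sub>m d)" "l < dim_col (1\<^sub>m d)"
    then have k: "k < d" and l: "l < d" by auto
    have "(V * U) $$ (k, l) = (\<Sum>m<d. V $$ (k, m) * U $$ (m, l))"
      by (rule index_mult_mat_sum[OF V U k l])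
    also have "\<dots> = cinner d (u k) (u l)"
      unfolding cinner_def V_def U_def using k l by (intro sum.cong) auto
    finally show "(V * U) $$ (k, l) = 1\<^sub>m d $$ (k, l)" using on k l unfolding orthonormal_def by simp
  qed (use U V in auto)
  then have UV: "U * V = 1\<^sub>m d" by (rule mat_mult_left_right_inverse[OF V U])
  have "(\<Sum>k<d. u k a * cnj (u k b)) = (\<Sum>k<d. U $$ (a, k) * V $$ (k, b))"
    unfolding U_def V_def using a b by (intro sum.cong) auto
  also have "\<dots> = (U * V) $$ (a, b)" by (rule index_mult_mat_sum[OF U V a b, symmetric])
  also have "\<dots> = of_bool (a = b)" unfolding UV using a b by simp
  finally show ?thesis .
qed

lemma spectral_mat_carrier [simp]: "spectral_mat d u lam \<in> carrier_mat d d"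
  unfolding spectral_mat_def by simp

lemma spectral_mat_dims [simp]: "dim_row (spectral_mat d u lam) = d" "dim_col (spectral_mat d u lam) = d"
  unfolding spectral_mat_def by simp_all

lemma index_spectral_mat:
  "a < d \<Longrightarrow> b < d \<Longrightarrow> spectral_mat d u lam $$ (a, b) = (\<Sum>k<d. of_real (lam k) * u k a * cnj (u k b))"
  unfolding spectral_mat_def by simp

theorem hermitian_spectral:
  assumes A: "hermitian d A"
  shows "\<exists>u lam. orthonormal d d u \<and> A = spectral_mat d u lam"
proof -
  obtain u lam where on: "orthonormal d d u" and ev: "eigenpairs d A d u lam"
    using orthonormal_eigenpairs_exist[OF A, of d] by auto
  have Ac: "A \<in> carrier_mat d d" using A hermitian_carrier by blast
  have "A = spectral_mat d u lam"
  proof (rule eq_matI)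
    fix a b assume "a < dim_row (spectral_mat d u lam)" "b < dim_col (spectral_mat d u lam)"
    then have a: "a < d" and b: "b < d" by (auto simp: spectral_mat_def)
    have "A $$ (a, b) = (\<Sum>c<d. A $$ (a, c) * of_bool (c = b))"
      using b by simp
    also have "\<dots> = (\<Sum>c<d. A $$ (a, c) * (\<Sum>k<d. u k c * cnj (u k b)))"
      using orthonormal_complete[OF on _ b] by (intro sum.cong) auto
    also have "\<dots> = (\<Sum>c<d. \<Sum>k<d. A $$ (a, c) * u k c * cnj (u k b))"
      by (simp add: sum_distrib_left mult.assoc)
    also have "\<dots> = (\<Sum>k<d. (\<Sum>c<d. A $$ (a, c) * u k c) * cnj (u k b))"
      by (subst sum.swap) (simp add: sum_distrib_right)
    also have "\<dots> = (\<Sum>k<d. of_real (lam k) * u k a * cnj (u k b))"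
    proof (rule sum.cong[OF refl])
      fix k assume "k \<in> {..<d}"
      then have "matvec d A (u k) a = of_real (lam k) * u k a" using ev a unfolding eigenpairs_def by auto
      then show "(\<Sum>c<d. A $$ (a, c) * u k c) * cnj (u k b) = of_real (lam k) * u k a * cnj (u k b)"
        using a unfolding matvec_def by simp
    qed
    finally show "A $$ (a, b) = spectral_mat d u lam $$ (a, b)" using a b by (simp add: index_spectral_mat)
  qed (use Ac in \<open>auto simp: spectral_mat_def\<close>)
  then show ?thesis using on by blast
qed

lemma hermitian_spectral_mat: "hermitian d (spectral_mat d u lam)"
  unfolding hermitian_def by (auto simp: index_spectral_mat ac_simps)

lemma matvec_spectral_mat:
  assumes "i < d"
  shows "matvec d (spectral_mat d u lam) x i = (\<Sum>k<d. of_real (lam k) * u k i * cinner d (u k) x)"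
proof -
  have "matvec d (spectral_mat d u lam) x i = (\<Sum>j<d. \<Sum>k<d. of_real (lam k) * u k i * cnj (u k j) * x j)"
    unfolding matvec_def using assms by (simp add: index_spectral_mat sum_distrib_right)
  also have "\<dots> = (\<Sum>k<d. \<Sum>j<d. of_real (lam k) * u k i * cnj (u k j) * x j)" by (rule sum.swap)
  also have "\<dots> = (\<Sum>k<d. of_real (lam k) * u k i * cinner d (u k) x)"
    unfolding cinner_def by (simp add: sum_distrib_left mult.assoc)
  finally show ?thesis .
qed

lemma Re_cinner_spectral_mat:
  "Re (cinner d x (matvec d (spectral_mat d u lam) x)) = (\<Sum>k<d. lam k * (cmod (cinner d (u k) x))\<^sup>2)"
proof -
  have "cinner d x (matvec d (spectral_mat d u lam) x)
      = (\<Sum>i<d. cnj (x i) * matvec d (spectral_mat d u lam) x i)"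
    by (simp only: cinner_def)
  also have "\<dots> = (\<Sum>i<d. \<Sum>k<d. cnj (x i) * (of_real (lam k) * u k i * cinner d (u k) x))"
    by (intro sum.cong refl) (simp add: matvec_spectral_mat sum_distrib_left)
  also have "\<dots> = (\<Sum>k<d. \<Sum>i<d. cnj (x i) * (of_real (lam k) * u k i * cinner d (u k) x))"
    by (rule sum.swap)
  also have "\<dots> = (\<Sum>k<d. of_real (lam k) * (cnj (cinner d (u k) x) * cinner d (u k) x))"
  proof (rule sum.cong[OF refl])
    fix k
    have "cnj (cinner d (u k) x) = (\<Sum>i<d. cnj (x i) * u k i)"
      unfolding cinner_def by (simp add: mult.commute)
    then show "(\<Sum>i<d. cnj (x i) * (of_real (lam k) * u k i * cinner d (u k) x))
        = of_real (lam k) * (cnj (cinner d (u k) x) * cinner d (u k) x)"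
      by (simp add: sum_distrib_left sum_distrib_right ac_simps)
  qed
  also have "\<dots> = (\<Sum>k<d. of_real (lam k * (cmod (cinner d (u k) x))\<^sup>2))"
  proof -
    have "\<And>z. cnj z * z = complex_of_real ((cmod z)\<^sup>2)"
      by (subst complex_norm_square) (rule mult.commute)
    then show ?thesis by (simp only: of_real_mult)
  qed
  finally show ?thesis by (simp only: Re_sum Re_complex_of_real)
qed

lemma spectral_mat_mult:
  assumes on: "orthonormal d d u"
  shows "spectral_mat d u l1 * spectral_mat d u l2 = spectral_mat d u (\<lambda>k. l1 k * l2 k)"
proof (rule eq_matI)
  fix a b assume "a < dim_row (spectral_mat d u (\<lambda>k. l1 k * l2 k))"
    "b < dim_col (spectral_mat d u (\<lambda>k. l1 k * l2 k))"
  then have a: "a < d" and b: "b < d" by (auto simp: spectral_mat_def)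
  let ?c = "\<lambda>k m. of_real (l1 k) * u k a * of_real (l2 m) * cnj (u m b)"
  have "(spectral_mat d u l1 * spectral_mat d u l2) $$ (a, b)
      = (\<Sum>c<d. spectral_mat d u l1 $$ (a, c) * spectral_mat d u l2 $$ (c, b))"
    by (rule index_mult_mat_sum[OF spectral_mat_carrier spectral_mat_carrier a b])
  also have "\<dots> = (\<Sum>c<d. \<Sum>k<d. \<Sum>m<d. ?c k m * (cnj (u k c) * u m c))"
    using a b by (intro sum.cong refl) (simp add: index_spectral_mat sum_product ac_simps)
  also have "\<dots> = (\<Sum>k<d. \<Sum>m<d. ?c k m * cinner d (u k) (u m))"
    unfolding cinner_def sum_distrib_left
    by (subst sum.swap) (intro sum.cong refl sum.swap)
  also have "\<dots> = (\<Sum>k<d. \<Sum>m<d. if m = k then ?c k k else 0)"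
    using on unfolding orthonormal_def by (intro sum.cong) auto
  also have "\<dots> = (\<Sum>k<d. of_real (l1 k * l2 k) * u k a * cnj (u k b))"
    by (intro sum.cong) auto
  finally show "(spectral_mat d u l1 * spectral_mat d u l2) $$ (a, b)
      = spectral_mat d u (\<lambda>k. l1 k * l2 k) $$ (a, b)"
    using a b by (simp add: index_spectral_mat)
qed (auto simp: spectral_mat_def)

lemma mtrace_spectral_mat:
  assumes on: "orthonormal d d u" shows "mtrace (spectral_mat d u lam) = of_real (\<Sum>k<d. lam k)"
proof -
  have "mtrace (spectral_mat d u lam) = (\<Sum>a<d. \<Sum>k<d. of_real (lam k) * (cnj (u k a) * u k a))"
    unfolding mtrace_def by (simp add: index_spectral_mat ac_simps)
  also have "\<dots> = (\<Sum>k<d. of_real (lam k) * cinner d (u k) (u k))"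
    unfolding cinner_def by (subst sum.swap) (simp add: sum_distrib_left)
  also have "\<dots> = (\<Sum>k<d. of_real (lam k))" using on unfolding orthonormal_def by simp
  finally show ?thesis by simp
qed

lemma matvec_spectral_mat_eigen:
  assumes on: "orthonormal d d u" and j: "j < d" and i: "i < d"
  shows "matvec d (spectral_mat d u lam) (u j) i = of_real (lam j) * u j i"
proof -
  have "matvec d (spectral_mat d u lam) (u j) i = (\<Sum>k<d. if k = j then of_real (lam j) * u j i else 0)"
    unfolding matvec_spectral_mat[OF i] using on j unfolding orthonormal_def by (intro sum.cong) auto
  then show ?thesis using j by simp
qed

section \<open>Positive semidefinite square roots and the trace norm\<close>

lemma index_mat_adjoint:
  "i < dim_col A \<Longrightarrow> j < dim_row A \<Longrightarrow> mat_adjoint A $$ (i, j) = cnj (A $$ (j, i))"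
  unfolding mat_adjoint_def by (simp add: mat_of_rows_index)

lemma mat_adjoint_dims [simp]:
  "dim_row (mat_adjoint A) = dim_col A" "dim_col (mat_adjoint A) = dim_row A"
  unfolding mat_adjoint_def by (simp_all add: mat_of_rows_def)

lemma hermitian_iff_mat_adjoint:
  assumes A: "A \<in> carrier_mat d d" shows "hermitian d A \<longleftrightarrow> mat_adjoint A = A"
proof
  assume h: "hermitian d A"
  show "mat_adjoint A = A"
  proof (rule eq_matI)
    fix i j assume "i < dim_row A" "j < dim_col A"
    then have i: "i < d" and j: "j < d" using A by auto
    show "mat_adjoint A $$ (i, j) = A $$ (i, j)"
      using index_mat_adjoint[of i A j] A i j hermitianD[OF h j i] by simp
  qed (use A in auto)
next
  assume adj: "mat_adjoint A = A"
  show "hermitian d A" unfolding hermitian_def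
  proof (intro conjI allI impI)
    fix i j assume i: "i < d" and j: "j < d"
    have "mat_adjoint A $$ (j, i) = cnj (A $$ (i, j))" using index_mat_adjoint[of j A i] A i j by simp
    then show "A $$ (j, i) = cnj (A $$ (i, j))" using adj by simp
  qed (rule A)
qed

lemma psd_iff_hermitian_cinner:
  "psd d B \<longleftrightarrow> hermitian d B \<and> (\<forall>x. 0 \<le> Re (cinner d x (matvec d B x)))"
proof -
  have quad: "(\<Sum>i<d. cnj (v $ i) * (B *\<^sub>v v) $ i) = cinner d (\<lambda>j. v $ j) (matvec d B (\<lambda>j. v $ j))"
    if "B \<in> carrier_mat d d" "v \<in> carrier_vec d" for v
    unfolding cinner_def using matvec_mult_mat_vec[OF that] by (intro sum.cong) auto
  have vec: "cinner d x (matvec d B x) = cinner d (\<lambda>j. vec d x $ j) (matvec d B (\<lambda>j. vec d x $ j))" for x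
    by (intro cinner_cong) (auto simp: matvec_def)
  show ?thesis
    unfolding psd_def using hermitian_iff_mat_adjoint[of B d] hermitian_carrier[of d B] quad vec
    by (metis vec_carrier)
qed

lemma psd_spectral:
  assumes "psd d B"
  shows "\<exists>u \<beta>. orthonormal d d u \<and> B = spectral_mat d u \<beta> \<and> (\<forall>k<d. 0 \<le> \<beta> k)"
proof -
  have h: "hermitian d B" and q: "\<And>x. 0 \<le> Re (cinner d x (matvec d B x))"
    using assms psd_iff_hermitian_cinner by auto
  obtain u \<beta> where on: "orthonormal d d u" and B: "B = spectral_mat d u \<beta>"
    using hermitian_spectral[OF h] by blast
  have "0 \<le> \<beta> k" if k: "k < d" for k
  proof -
    have "cinner d (u k) (matvec d B (u k)) = of_real (\<beta> k) * cinner d (u k) (u k)"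
      using matvec_spectral_mat_eigen[OF on k] B by (intro cinner_eigenvector) auto
    also have "\<dots> = of_real (\<beta> k)" using on k unfolding orthonormal_def by simp
    finally show ?thesis using q[of "u k"] by simp
  qed
  then show ?thesis using on B by blast
qed

lemma psd_cinner_eq_0_imp_matvec_eq_0:
  assumes "psd d B" "Re (cinner d x (matvec d B x)) = 0" "i < d"
  shows "matvec d B x i = 0"
proof -
  obtain u \<beta> where on: "orthonormal d d u" and B: "B = spectral_mat d u \<beta>" and nn: "\<forall>k<d. 0 \<le> \<beta> k"
    using psd_spectral[OF assms(1)] by blast
  have "(\<Sum>k<d. \<beta> k * (cmod (cinner d (u k) x))\<^sup>2) = 0"
    using assms(2) Re_cinner_spectral_mat B by simp
  then have "\<forall>k\<in>{..<d}. \<beta> k * (cmod (cinner d (u k) x))\<^sup>2 = 0"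
    by (subst sum_nonneg_eq_0_iff[symmetric]) (use nn in auto)
  then have "\<forall>k<d. of_real (\<beta> k) * cinner d (u k) x = 0" by auto
  then show ?thesis unfolding B matvec_spectral_mat[OF assms(3)] by (intro sum.neutral) (auto simp: ac_simps)
qed

text \<open>If \<open>B\<^sup>2 = C\<^sup>2\<close> and \<open>(B - C) x = \<mu> x\<close> with \<open>\<mu> \<noteq> 0\<close>, then
  \<open>0 = \<langle>(B - C) x, (B + C) x\<rangle> = \<mu> (\<langle>x, B x\<rangle> + \<langle>x, C x\<rangle>)\<close> in real part, so both quadratic forms
  vanish, whence \<open>B x = C x = 0\<close> and \<open>x = 0\<close>.\<close>

lemma psd_square_eq_eigenvector_eq_0:
  assumes pB: "psd d B" and pC: "psd d C" and sq: "B * B = C * C"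
    and x: "\<And>i. i < d \<Longrightarrow> matvec d B x i - matvec d C x i = of_real \<mu> * x i" and \<mu>: "\<mu> \<noteq> 0"
  shows "cinner d x x = 0"
proof -
  have hB: "hermitian d B" and qB: "0 \<le> Re (cinner d x (matvec d B x))"
    and hC: "hermitian d C" and qC: "0 \<le> Re (cinner d x (matvec d C x))"
    using pB pC psd_iff_hermitian_cinner by auto
  have B: "B \<in> carrier_mat d d" and C: "C \<in> carrier_mat d d" using hB hC hermitian_carrier by auto
  define y where "y = matvec d B x"
  define z where "z = matvec d C x"
  have "cinner d y y = cinner d x (matvec d (B * B) x)"
    unfolding y_def matvec_mult[OF B B] using cinner_matvec_hermitian[OF hB, of x "matvec d B x"] by simp
  also have "\<dots> = cinner d z z"
    unfolding z_def sq matvec_mult[OF C C] using cinner_matvec_hermitian[OF hC, of x "matvec d C x"] by simp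
  finally have yz: "cinner d y y = cinner d z z" .
  have "Re (cinner d z y) = Re (cinner d y z)" unfolding cnj_cinner[of d y z, symmetric] by simp
  then have "Re (cinner d (\<lambda>i. y i - z i) (\<lambda>i. y i + z i)) = 0"
    unfolding cinner_diff_left cinner_add_right using yz by simp
  moreover have "cinner d (\<lambda>i. y i - z i) (\<lambda>i. y i + z i) = of_real \<mu> * (cinner d x y + cinner d x z)"
  proof -
    have "cinner d (\<lambda>i. y i - z i) (\<lambda>i. y i + z i) = cinner d (\<lambda>i. of_real \<mu> * x i) (\<lambda>i. y i + z i)"
      using x unfolding y_def z_def by (intro cinner_cong) auto
    then show ?thesis unfolding cinner_scale_left cinner_add_right by simp
  qed
  ultimately have "Re (cinner d x y) + Re (cinner d x z) = 0" using \<mu> by simp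
  then have "Re (cinner d x y) = 0" "Re (cinner d x z) = 0"
    using qB qC unfolding y_def z_def by linarith+
  then have "\<forall>i<d. y i = 0 \<and> z i = 0"
    using psd_cinner_eq_0_imp_matvec_eq_0[OF pB] psd_cinner_eq_0_imp_matvec_eq_0[OF pC]
    unfolding y_def z_def by blast
  then have "\<forall>i<d. x i = 0" using x \<mu> unfolding y_def z_def by (metis diff_zero mult_eq_0_iff of_real_eq_0_iff)
  then show ?thesis by (simp add: cinner_self_eq_0_iff)
qed

theorem psd_square_eq_imp_eq:
  assumes pB: "psd d B" and pC: "psd d C" and sq: "B * B = C * C"
  shows "B = C"
proof -
  have B: "B \<in> carrier_mat d d" and C: "C \<in> carrier_mat d d"
    using pB pC psd_iff_hermitian_cinner hermitian_carrier by blast+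
  have "hermitian d (B - C)" using pB pC psd_iff_hermitian_cinner hermitian_minus by blast
  then obtain w \<mu> where on: "orthonormal d d w" and D: "B - C = spectral_mat d w \<mu>"
    using hermitian_spectral by blast
  have \<mu>: "\<mu> k = 0" if k: "k < d" for k
  proof (rule ccontr)
    assume "\<mu> k \<noteq> 0"
    moreover have "matvec d B (w k) i - matvec d C (w k) i = of_real (\<mu> k) * w k i" if "i < d" for i
      using matvec_minus[OF B C] matvec_spectral_mat_eigen[OF on k that] D by metis
    ultimately have "cinner d (w k) (w k) = 0" using psd_square_eq_eigenvector_eq_0[OF pB pC sq] by blast
    then show False using on k unfolding orthonormal_def by simp
  qed
  show ?thesis
  proof (rule eq_matI)
    fix a b assume "a < dim_row C" "b < dim_col C"
    then have a: "a < d" and b: "b < d" using C by auto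
    have "(B - C) $$ (a, b) = 0" unfolding D index_spectral_mat[OF a b] using \<mu> by simp
    then show "B $$ (a, b) = C $$ (a, b)" using B C a b by simp
  qed (use B C in auto)
qed

lemma trace_norm_hermitian:
  assumes h: "hermitian d \<Delta>" and on: "orthonormal d d u" and \<Delta>: "\<Delta> = spectral_mat d u t"
  shows "trace_norm \<Delta> = (\<Sum>k<d. \<bar>t k\<bar>)"
proof -
  define R where "R = spectral_mat d u (\<lambda>k. \<bar>t k\<bar>)"
  have "mat_adjoint \<Delta> = \<Delta>" using hermitian_iff_mat_adjoint h hermitian_carrier by blast
  then have "mat_adjoint \<Delta> * \<Delta> = spectral_mat d u (\<lambda>k. t k * t k)"
    unfolding \<Delta> by (simp add: spectral_mat_mult[OF on])
  also have "\<dots> = R * R" unfolding R_def spectral_mat_mult[OF on] by simp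
  finally have RR: "R * R = mat_adjoint \<Delta> * \<Delta>" ..
  have pR: "psd d R"
    unfolding psd_iff_hermitian_cinner R_def Re_cinner_spectral_mat
    by (auto simp: hermitian_spectral_mat intro!: sum_nonneg)
  have "psd_sqrt (mat_adjoint \<Delta> * \<Delta>) = R"
    unfolding psd_sqrt_def
  proof (rule the_equality)
    show "psd (dim_row (mat_adjoint \<Delta> * \<Delta>)) R \<and> R * R = mat_adjoint \<Delta> * \<Delta>"
      using pR RR \<Delta> by simp
  next
    fix S assume "psd (dim_row (mat_adjoint \<Delta> * \<Delta>)) S \<and> S * S = mat_adjoint \<Delta> * \<Delta>"
    then show "S = R" using psd_square_eq_imp_eq[OF _ pR] RR \<Delta> by auto
  qed
  then show ?thesis unfolding trace_norm_def R_def using mtrace_spectral_mat[OF on] by simp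
qed

section \<open>The two-copy pairing\<close>

definition Pi_pairing :: "nat \<Rightarrow> complex mat \<Rightarrow> complex mat \<Rightarrow> complex" where
  "Pi_pairing n X Y = (\<Sum>r<2^n * 2^n. \<Sum>s<2^n * 2^n.
     PiAll n $$ (r, s) * (X $$ (s div 2^n, r div 2^n) * Y $$ (s mod 2^n, r mod 2^n)))"

definition Pi_expect :: "nat \<Rightarrow> (nat \<Rightarrow> complex) \<Rightarrow> complex" where
  "Pi_expect n x = cinner (2^n * 2^n) x (matvec (2^n * 2^n) (PiAll n) x)"

lemma sum_lessThan_mult_div_mod:
  assumes "0 < (N::nat)"
  shows "(\<Sum>s<N * N. f (s div N) (s mod N)) = (\<Sum>i<N. \<Sum>j<N. f i j)"
proof -
  have "(\<Sum>s<N * N. f (s div N) (s mod N)) = (\<Sum>i<N. \<Sum>s\<in>{i * N..<i * N + N}. f (s div N) (s mod N))"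
    using sum.nat_group[of "\<lambda>s. f (s div N) (s mod N)" N N] by (simp add: mult.commute)
  also have "\<dots> = (\<Sum>i<N. \<Sum>j<N. f i j)"
  proof (rule sum.cong[OF refl])
    fix i
    have "(\<Sum>s\<in>{i * N..<i * N + N}. f (s div N) (s mod N)) = (\<Sum>j<N. f ((j + i * N) div N) ((j + i * N) mod N))"
      using sum.shift_bounds_nat_ivl[of "\<lambda>s. f (s div N) (s mod N)" 0 "i * N" N]
      by (simp add: atLeast0LessThan add.commute)
    also have "\<dots> = (\<Sum>j<N. f i j)" using assms by (intro sum.cong) auto
    finally show "(\<Sum>s\<in>{i * N..<i * N + N}. f (s div N) (s mod N)) = (\<Sum>j<N. f i j)" .
  qed
  finally show ?thesis .
qed

lemma kron_carrier: "X \<in> carrier_mat N N \<Longrightarrow> Y \<in> carrier_mat N N \<Longrightarrow> kron X Y \<in> carrier_mat (N * N) (N * N)"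
  unfolding kron_def by auto

lemma index_kron:
  "X \<in> carrier_mat N N \<Longrightarrow> Y \<in> carrier_mat N N \<Longrightarrow> s < N * N \<Longrightarrow> r < N * N \<Longrightarrow>
   kron X Y $$ (s, r) = X $$ (s div N, r div N) * Y $$ (s mod N, r mod N)"
  unfolding kron_def by auto

lemma mtrace_PiAll_kron:
  assumes X: "X \<in> carrier_mat (2^n) (2^n)" and Y: "Y \<in> carrier_mat (2^n) (2^n)"
  shows "mtrace (PiAll n * kron X Y) = Pi_pairing n X Y"
proof -
  have K: "kron X Y \<in> carrier_mat (2^n * 2^n) (2^n * 2^n)" by (rule kron_carrier[OF X Y])
  have "mtrace (PiAll n * kron X Y) = (\<Sum>r<2^n * 2^n. (PiAll n * kron X Y) $$ (r, r))"
    unfolding mtrace_def using PiAll_carrier K by simp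
  also have "\<dots> = Pi_pairing n X Y" unfolding Pi_pairing_def
  proof (rule sum.cong[OF refl])
    fix r :: nat assume "r \<in> {..<2^n * 2^n}"
    then have r: "r < 2^n * 2^n" by simp
    show "(PiAll n * kron X Y) $$ (r, r) = (\<Sum>s<2^n * 2^n.
        PiAll n $$ (r, s) * (X $$ (s div 2^n, r div 2^n) * Y $$ (s mod 2^n, r mod 2^n)))"
      unfolding index_mult_mat_sum[OF PiAll_carrier K r r] using index_kron[OF X Y _ r]
      by (intro sum.cong) auto
  qed
  finally show ?thesis .
qed

lemma Pi_pairing_diff:
  assumes R: "R \<in> carrier_mat (2^n) (2^n)" and S: "S \<in> carrier_mat (2^n) (2^n)"
  shows "Pi_pairing n R R - Pi_pairing n S S = Pi_pairing n R (R - S) + Pi_pairing n (R - S) S"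
proof -
  have "s div 2^n < 2^n" "r div 2^n < 2^n" if "s < 2^n * 2^n" "r < 2^n * 2^n" for s r :: nat
    using that by (simp_all add: less_mult_imp_div_less)
  then show ?thesis
    unfolding Pi_pairing_def sum_subtractf[symmetric] sum.distrib[symmetric]
    using R S by (intro sum.cong refl) (auto simp: algebra_simps)
qed

lemma Cmeas_diff:
  assumes "\<rho> \<in> carrier_mat (2^n) (2^n)" "\<sigma> \<in> carrier_mat (2^n) (2^n)"
  shows "Cmeas n \<rho> - Cmeas n \<sigma> = - (Re (Pi_pairing n \<rho> (\<rho> - \<sigma>)) + Re (Pi_pairing n (\<rho> - \<sigma>) \<sigma>))"
proof -
  have "Re (Pi_pairing n \<rho> \<rho>) - Re (Pi_pairing n \<sigma> \<sigma>) = Re (Pi_pairing n \<rho> (\<rho> - \<sigma>) + Pi_pairing n (\<rho> - \<sigma>) \<sigma>)"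
    unfolding Pi_pairing_diff[OF assms, symmetric] by simp
  then show ?thesis unfolding Cmeas_def mtrace_PiAll_kron[OF assms(1,1)] mtrace_PiAll_kron[OF assms(2,2)]
    by simp
qed

lemma Pi_expect_expand:
  "Pi_expect n x = (\<Sum>r<2^n * 2^n. \<Sum>s<2^n * 2^n. cnj (x r) * PiAll n $$ (r, s) * x s)"
  unfolding Pi_expect_def cinner_def matvec_def by (simp add: sum_distrib_left mult.assoc)

lemma Pi_pairing_spectral_mat:
  "Pi_pairing n (spectral_mat (2^n) a \<alpha>) (spectral_mat (2^n) b \<beta>)
     = (\<Sum>m<2^n. \<Sum>k<2^n. of_real (\<alpha> m) * of_real (\<beta> k) * Pi_expect n (\<lambda>s. a m (s div 2^n) * b k (s mod 2^n)))"
proof -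
  let ?N = "2^n :: nat"
  let ?M = "2^n * 2^n :: nat"
  let ?P = "PiAll n"
  define x where "x = (\<lambda>m k s. a m (s div ?N) * b k (s mod ?N))"
  define F where "F = (\<lambda>r s m k. of_real (\<alpha> m) * of_real (\<beta> k) * (cnj (x m k r) * ?P $$ (r, s) * x m k s))"
  have dm: "s div ?N < ?N" if "s < ?M" for s using that by (simp add: less_mult_imp_div_less)
  have "Pi_pairing n (spectral_mat ?N a \<alpha>) (spectral_mat ?N b \<beta>) = (\<Sum>r<?M. \<Sum>s<?M. \<Sum>m<?N. \<Sum>k<?N. F r s m k)"
    unfolding Pi_pairing_def
  proof (intro sum.cong refl)
    fix r s assume "r \<in> {..<?M}" and "s \<in> {..<?M}"
    then have i: "r div ?N < ?N" "s div ?N < ?N" "r mod ?N < ?N" "s mod ?N < ?N" using dm by auto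
    show "?P $$ (r, s) * (spectral_mat ?N a \<alpha> $$ (s div ?N, r div ?N) * spectral_mat ?N b \<beta> $$ (s mod ?N, r mod ?N))
       = (\<Sum>m<?N. \<Sum>k<?N. F r s m k)"
      unfolding index_spectral_mat[OF i(2) i(1)] index_spectral_mat[OF i(4) i(3)] F_def x_def
      by (simp add: sum_product sum_distrib_left ac_simps) (rule sum.swap)
  qed
  also have "\<dots> = (\<Sum>r<?M. \<Sum>m<?N. \<Sum>s<?M. \<Sum>k<?N. F r s m k)" by (intro sum.cong refl sum.swap)
  also have "\<dots> = (\<Sum>m<?N. \<Sum>r<?M. \<Sum>k<?N. \<Sum>s<?M. F r s m k)" by (subst sum.swap) (intro sum.cong refl sum.swap)
  also have "\<dots> = (\<Sum>m<?N. \<Sum>k<?N. \<Sum>r<?M. \<Sum>s<?M. F r s m k)" by (intro sum.cong refl sum.swap)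
  also have "\<dots> = (\<Sum>m<?N. \<Sum>k<?N. of_real (\<alpha> m) * of_real (\<beta> k) * Pi_expect n (x m k))"
    unfolding Pi_expect_expand F_def by (simp add: sum_distrib_left)
  finally show ?thesis unfolding x_def .
qed

lemma cinner_tensor:
  "cinner (2^n * 2^n) (\<lambda>s. a (s div 2^n) * b (s mod 2^n)) (\<lambda>s. a (s div 2^n) * b (s mod 2^n))
     = cinner (2^n) a a * cinner (2^n) b b"
proof -
  have "cinner (2^n * 2^n) (\<lambda>s. a (s div 2^n) * b (s mod 2^n)) (\<lambda>s. a (s div 2^n) * b (s mod 2^n))
      = (\<Sum>i<2^n. \<Sum>j<2^n. cnj (a i * b j) * (a i * b j))"
    unfolding cinner_def by (rule sum_lessThan_mult_div_mod[of "2^n" "\<lambda>i j. cnj (a i * b j) * (a i * b j)"]) simp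
  also have "\<dots> = cinner (2^n) a a * cinner (2^n) b b"
    unfolding cinner_def by (simp add: sum_product ac_simps)
  finally show ?thesis .
qed

lemma Pi_expect_tensor_bounds:
  assumes "cinner (2^n) a a = 1" "cinner (2^n) b b = 1"
  shows "0 \<le> Re (Pi_expect n (\<lambda>s. a (s div 2^n) * b (s mod 2^n)))
    \<and> Re (Pi_expect n (\<lambda>s. a (s div 2^n) * b (s mod 2^n))) \<le> 1"
proof -
  have "hermitian (2^n * 2^n) (PiAll n)" "PiAll n * PiAll n = PiAll n"
    using PiAll_hermitian_idem by auto
  from hermitian_idem_cinner_bounds[OF this, where x = "\<lambda>s. a (s div 2^n) * b (s mod 2^n)"]
  show ?thesis unfolding Pi_expect_def cinner_tensor assms by simp
qed

text \<open>Since \<open>\<Sum> t = 0\<close>, one may replace each weight \<open>c\<^sub>k \<in> [0,1]\<close> by \<open>c\<^sub>k - 1/2\<close>.\<close>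

lemma abs_sum_mult_le_half:
  fixes t c :: "nat \<Rightarrow> real"
  assumes t: "(\<Sum>k<N. t k) = 0" and c: "\<And>k. k < N \<Longrightarrow> 0 \<le> c k \<and> c k \<le> 1"
  shows "\<bar>\<Sum>k<N. t k * c k\<bar> \<le> (\<Sum>k<N. \<bar>t k\<bar>) / 2"
proof -
  have "(\<Sum>k<N. t k * c k) = (\<Sum>k<N. t k * (c k - 1/2))"
    using t by (simp add: algebra_simps sum_subtractf sum_divide_distrib[symmetric])
  also have "\<bar>\<dots>\<bar> \<le> (\<Sum>k<N. \<bar>t k\<bar> * \<bar>c k - 1/2\<bar>)" by (rule order_trans[OF sum_abs]) (simp add: abs_mult)
  also have "\<dots> \<le> (\<Sum>k<N. \<bar>t k\<bar> * (1/2))"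
    using c by (intro sum_mono mult_left_mono) (auto simp: abs_if)
  finally show ?thesis by (simp add: sum_divide_distrib)
qed

lemma convex_combination_unit_interval:
  fixes p r :: "nat \<Rightarrow> real"
  assumes "\<And>m. m < N \<Longrightarrow> 0 \<le> p m" "(\<Sum>m<N. p m) = 1" "\<And>m. m < N \<Longrightarrow> 0 \<le> r m \<and> r m \<le> 1"
  shows "0 \<le> (\<Sum>m<N. p m * r m) \<and> (\<Sum>m<N. p m * r m) \<le> 1"
proof
  show "0 \<le> (\<Sum>m<N. p m * r m)" using assms by (intro sum_nonneg) auto
  have "(\<Sum>m<N. p m * r m) \<le> (\<Sum>m<N. p m)" using assms by (intro sum_mono) (simp add: mult_left_le)
  then show "(\<Sum>m<N. p m * r m) \<le> 1" using assms(2) by simp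
qed

lemma abs_Re_Pi_pairing_le:
  assumes w: "orthonormal (2^n) (2^n) w" and p: "\<forall>m<2^n. 0 \<le> p m" "(\<Sum>m<2^n. p m) = 1"
    and u: "orthonormal (2^n) (2^n) u" and t: "(\<Sum>k<2^n. t k) = 0"
  shows "\<bar>Re (Pi_pairing n (spectral_mat (2^n) w p) (spectral_mat (2^n) u t))\<bar> \<le> (\<Sum>k<2^n. \<bar>t k\<bar>) / 2"
    and "\<bar>Re (Pi_pairing n (spectral_mat (2^n) u t) (spectral_mat (2^n) w p))\<bar> \<le> (\<Sum>k<2^n. \<bar>t k\<bar>) / 2"
proof -
  let ?N = "2^n :: nat"
  have unit: "\<And>m. m < ?N \<Longrightarrow> cinner ?N (w m) (w m) = 1" "\<And>k. k < ?N \<Longrightarrow> cinner ?N (u k) (u k) = 1"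
    using w u unfolding orthonormal_def by simp_all
  define c1 where "c1 k = (\<Sum>m<?N. p m * Re (Pi_expect n (\<lambda>s. w m (s div ?N) * u k (s mod ?N))))" for k
  define c2 where "c2 k = (\<Sum>m<?N. p m * Re (Pi_expect n (\<lambda>s. u k (s div ?N) * w m (s mod ?N))))" for k
  have "Re (Pi_pairing n (spectral_mat ?N w p) (spectral_mat ?N u t)) = (\<Sum>k<?N. t k * c1 k)"
    unfolding Pi_pairing_spectral_mat c1_def Re_sum
    by (subst sum.swap) (simp add: sum_distrib_left ac_simps)
  also have "\<bar>\<dots>\<bar> \<le> (\<Sum>k<?N. \<bar>t k\<bar>) / 2"
    unfolding c1_def using unit p
    by (intro abs_sum_mult_le_half[OF t] convex_combination_unit_interval Pi_expect_tensor_bounds) auto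
  finally show "\<bar>Re (Pi_pairing n (spectral_mat ?N w p) (spectral_mat ?N u t))\<bar> \<le> (\<Sum>k<?N. \<bar>t k\<bar>) / 2" .
  have "Re (Pi_pairing n (spectral_mat ?N u t) (spectral_mat ?N w p)) = (\<Sum>k<?N. t k * c2 k)"
    unfolding Pi_pairing_spectral_mat c2_def Re_sum by (simp add: sum_distrib_left ac_simps)
  also have "\<bar>\<dots>\<bar> \<le> (\<Sum>k<?N. \<bar>t k\<bar>) / 2"
    unfolding c2_def using unit p
    by (intro abs_sum_mult_le_half[OF t] convex_combination_unit_interval Pi_expect_tensor_bounds) auto
  finally show "\<bar>Re (Pi_pairing n (spectral_mat ?N u t) (spectral_mat ?N w p))\<bar> \<le> (\<Sum>k<?N. \<bar>t k\<bar>) / 2" .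
qed

lemma density_spectral:
  assumes "density n \<rho>"
  shows "\<exists>w p. orthonormal (2^n) (2^n) w \<and> \<rho> = spectral_mat (2^n) w p \<and> (\<forall>m<2^n. 0 \<le> p m) \<and> (\<Sum>m<2^n. p m) = 1"
proof -
  obtain w p where w: "orthonormal (2^n) (2^n) w" and \<rho>: "\<rho> = spectral_mat (2^n) w p" and p: "\<forall>m<2^n. 0 \<le> p m"
    using assms psd_spectral unfolding density_def by blast
  have "complex_of_real (\<Sum>m<2^n. p m) = 1"
    using assms mtrace_spectral_mat[OF w, of p] \<rho> unfolding density_def by simp
  then show ?thesis using w \<rho> p of_real_eq_1_iff by blast
qed

theorem mainTheorem18:
  fixes n :: nat and \<rho> \<sigma> :: "complex mat"
  assumes "density n \<rho>" and "density n \<sigma>"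
  shows "\<bar>Cmeas n \<rho> - Cmeas n \<sigma>\<bar> \<le> trace_norm (\<rho> - \<sigma>)"
proof -
  let ?N = "2^n :: nat"
  obtain w p where w: "orthonormal ?N ?N w" and \<rho>: "\<rho> = spectral_mat ?N w p"
    and p: "\<forall>m<?N. 0 \<le> p m" "(\<Sum>m<?N. p m) = 1"
    using density_spectral[OF assms(1)] by blast
  obtain w' p' where w': "orthonormal ?N ?N w'" and \<sigma>: "\<sigma> = spectral_mat ?N w' p'"
    and p': "\<forall>m<?N. 0 \<le> p' m" "(\<Sum>m<?N. p' m) = 1"
    using density_spectral[OF assms(2)] by blast
  have h: "hermitian ?N (\<rho> - \<sigma>)"
    using assms hermitian_minus psd_iff_hermitian_cinner unfolding density_def by blast
  then obtain u t where u: "orthonormal ?N ?N u" and \<Delta>: "\<rho> - \<sigma> = spectral_mat ?N u t"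
    using hermitian_spectral by blast
  have "complex_of_real (\<Sum>k<?N. t k) = mtrace \<rho> - mtrace \<sigma>"
    unfolding mtrace_spectral_mat[OF u, symmetric] \<Delta>[symmetric] mtrace_def \<rho> \<sigma> by (simp add: sum_subtractf)
  also have "\<dots> = 0" using assms unfolding density_def by simp
  finally have t: "(\<Sum>k<?N. t k) = 0" by (simp only: of_real_eq_0_iff)
  have "\<bar>Cmeas n \<rho> - Cmeas n \<sigma>\<bar> \<le> \<bar>Re (Pi_pairing n \<rho> (\<rho> - \<sigma>))\<bar> + \<bar>Re (Pi_pairing n (\<rho> - \<sigma>) \<sigma>)\<bar>"
    using Cmeas_diff[of \<rho> n \<sigma>] \<rho> \<sigma> by simp
  also have "\<dots> \<le> (\<Sum>k<?N. \<bar>t k\<bar>)"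
    using abs_Re_Pi_pairing_le(1)[OF w p u t] abs_Re_Pi_pairing_le(2)[OF w' p' u t]
    unfolding \<Delta>[symmetric] \<rho>[symmetric] \<sigma>[symmetric] by simp
  also have "\<dots> = trace_norm (\<rho> - \<sigma>)" by (rule trace_norm_hermitian[OF h u \<Delta>, symmetric])
  finally show ?thesis .
qed

end
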